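(* With notation: $\xi=e^{i\pi/5}$, $\tau=\frac{1+\sqrt5}{2}$, $L(n)=\{\sum_{j=0}^9 n_j\xi^j: n_j\in\mathbb{N}_0,\ \sum_j n_j\le n\}\cap\mathbb{R}$, $\mathbb{Z}[\tau]=\mathbb{Z}+\mathbb{Z}\tau$, $x\mapsto x'$ the automorphism $a+b\sqrt5\mapsto a-b\sqrt5$ of $\mathbb{Q}[\sqrt5]$, and $\Sigma(\Omega)=\{x\in\mathbb{Z}[\tau]:x'\in\Omega\}$: for every integer $n\ge3$, $L(n)$ is a proper subset of $\Sigma([-n,n])\cap[-n,n]$. *)

theory Defs
  imports Complex_Main
begin

definition xi :: complex where
  "xi = exp (\<i> * of_real pi / 5)"

definition tau :: real where
  "tau = (1 + sqrt 5) / 2"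

definition L :: "nat \<Rightarrow> real set" where
  "L n = {Re z | z. Im z = 0 \<and>
      (\<exists>c :: nat \<Rightarrow> nat. (\<Sum>j<10. c j) \<le> n \<and> z = (\<Sum>j<10. of_nat (c j) * xi ^ j))}"

definition Ztau :: "real set" where
  "Ztau = {of_int a + of_int b * tau | a b. True}"

definition conj5 :: "real \<Rightarrow> real" where
  "conj5 x = (THE y. \<exists>a b :: rat. x = of_rat a + of_rat b * sqrt 5 \<and> y = of_rat a - of_rat b * sqrt 5)"

definition Sigma_win :: "real set \<Rightarrow> real set" where
  "Sigma_win \<Omega> = {x \<in> Ztau. conj5 x \<in> \<Omega>}"

end

theory Submission
  imports Defs "HOL-Computational_Algebra.Primes"
begin

(* Since xi^5 = -1, a sum of at most n powers of xi equals sum_{j<5} d_j xi^j with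
   sum_j |d_j| <= n. Its imaginary part is sin(pi/5) ((d_1 + d_4) + (d_2 + d_3) tau), and 1, tau
   are linearly independent over Q, so for a real sum d_4 = -d_1, d_3 = -d_2 and the sum is
   d_0 + d_1 tau + d_2 (tau - 1) with |d_0| + 2 |d_1| + 2 |d_2| <= n. Since 1 < tau < 2, this
   number and its conjugate lie in [-n, n]. The inclusion is proper because coordinates in
   Z[tau] are unique: sqrt 5 = 2 tau - 1 (for n = 3) and 2 - n + 3 tau (for n >= 4) lie in the
   window but have no such representation of cost at most n. *)

lemma sqrt_prime_irrational:
  assumes "prime (p::nat)"
  shows "sqrt (real p) \<notin> \<rat>"
proof
  assume "sqrt (real p) \<in> \<rat>"
  then obtain m n :: nat
    where "n \<noteq> 0" "\<bar>sqrt (real p)\<bar> = m / n" and coprime: "coprime m n"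
    by (rule Rats_abs_nat_div_natE)
  then have "real m = sqrt (real p) * n" by (simp add: field_simps)
  then have "real (m\<^sup>2) = real (p * n\<^sup>2)" by (simp add: power_mult_distrib)
  then have m_sq: "m\<^sup>2 = p * n\<^sup>2" by (simp only: of_nat_eq_iff)
  then have "p dvd m" using assms by (metis dvd_triv_left prime_dvd_power)
  then obtain k where "m = p * k" ..
  with m_sq have "n\<^sup>2 = p * k\<^sup>2"
    using prime_gt_0_nat[OF assms] by (simp add: power2_eq_square algebra_simps)
  then have "p dvd n" using assms by (metis dvd_triv_left prime_dvd_power)
  with coprime \<open>p dvd m\<close> have "p = 1" by (rule coprime_common_divisor_nat)
  with assms show False by simp
qed

lemma sqrt5_coords_unique:
  assumes "of_rat a + of_rat b * sqrt 5 = of_rat c + of_rat d * sqrt 5"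
  shows "a = c \<and> b = d"
proof -
  have "b = d"
  proof (rule ccontr)
    assume "b \<noteq> d"
    with assms have "sqrt 5 = of_rat ((a - c) / (d - b))"
      by (simp add: of_rat_diff of_rat_divide field_simps)
    moreover have "sqrt (real 5) \<notin> \<rat>" by (rule sqrt_prime_irrational) simp
    ultimately show False by simp
  qed
  with assms show ?thesis by simp
qed

lemma Ztau_eq_sqrt5_form:
  "of_int a + of_int b * tau = of_rat (of_int a + of_int b / 2) + of_rat (of_int b / 2) * sqrt 5"
  by (simp add: tau_def of_rat_add of_rat_mult of_rat_divide field_simps)

lemma Ztau_coords_unique:
  assumes "of_int a + of_int b * tau = of_int c + of_int d * tau"
  shows "a = c \<and> b = d"
  using sqrt5_coords_unique[OF assms[unfolded Ztau_eq_sqrt5_form]] by simp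

lemma conj5_sqrt5_form: "conj5 (of_rat a + of_rat b * sqrt 5) = of_rat a - of_rat b * sqrt 5"
  unfolding conj5_def by (rule the_equality) (auto dest: sqrt5_coords_unique)

lemma conj5_Ztau: "conj5 (of_int a + of_int b * tau) = of_int a + of_int b * (1 - tau)"
  unfolding Ztau_eq_sqrt5_form conj5_sqrt5_form
  by (simp add: tau_def of_rat_add of_rat_mult of_rat_divide field_simps)

lemma tau_bounds: "1 < tau" "tau < 5/3"
proof -
  have "1 < sqrt 5" by simp
  moreover have "sqrt 5 < 7/3" by (rule real_less_lsqrt) (simp_all add: power2_eq_square)
  ultimately show "1 < tau" "tau < 5/3" unfolding tau_def by simp_all
qed

lemma sum_lessThan_double:
  fixes m :: nat
  shows "(\<Sum>j<2*m. f j) = (\<Sum>j<m. f j + f (j + m))"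
proof -
  have "(\<Sum>j<2*m. f j) = (\<Sum>j<m. f j) + (\<Sum>j=m..<m+m. f j)"
    by (simp add: mult_2 lessThan_atLeast0 sum.atLeastLessThan_concat)
  also have "(\<Sum>j=m..<m+m. f j) = (\<Sum>j<m. f (j + m))"
    by (simp add: lessThan_atLeast0 sum.shift_bounds_nat_ivl[of f 0 m m, simplified])
  finally show ?thesis by (simp add: sum.distrib)
qed

lemma sum_power_fold_neg_one:
  fixes w :: "'a::comm_ring_1" and m :: nat
  assumes "w ^ m = -1"
  shows "(\<Sum>j<2*m. f j * w ^ j) = (\<Sum>j<m. (f j - f (j + m)) * w ^ j)"
  unfolding sum_lessThan_double by (simp add: power_add assms algebra_simps)

lemma cos_pi_div_5: "cos (pi/5) = tau/2"
proof -
  define c where "c = cos (pi/5)"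
  have "c > 0" unfolding c_def by (rule cos_gt_zero_pi) (use pi_gt_zero in linarith)+
  have "cos (3*(pi/5)) = cos (pi - 2*(pi/5))" by (simp add: field_simps)
  then have "4*c^3 - 3*c = -(2*c^2 - 1)" unfolding c_def cos_treble_cos cos_pi_minus cos_double_cos .
  then have "(c+1)*(4*c^2-2*c-1) = 0" by (simp add: algebra_simps power2_eq_square power3_eq_cube)
  with \<open>c > 0\<close> have "4*c^2-2*c-1 = 0" by simp
  then have "(4*c-1)^2 = (sqrt 5)^2" by (simp add: algebra_simps power2_eq_square)
  then have "4*c-1 = sqrt 5 \<or> 4*c-1 = - sqrt 5" by (rule power2_eq_iff[THEN iffD1])
  moreover have "1 < sqrt 5" by simp
  ultimately have "4*c-1 = sqrt 5" using \<open>c > 0\<close> by linarith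
  then show ?thesis unfolding c_def tau_def by simp
qed

lemma xi_eq_cis: "xi = cis (pi/5)"
  unfolding xi_def cis_conv_exp by (simp add: field_simps)

lemma xi_power: "xi ^ j = cis (real j * pi / 5)"
  unfolding xi_eq_cis DeMoivre by simp

lemma xi_power_5: "xi ^ 5 = -1"
  by (simp add: xi_power)

lemma cis_pi_minus: "cis (pi - x) = - cnj (cis x)"
  by (simp add: complex_eq_iff)

lemma xi_power_reflect:
  assumes "j \<le> 5"
  shows "xi ^ (5 - j) = - cnj (xi ^ j)"
proof -
  have "real (5 - j) * pi / 5 = pi - real j * pi / 5"
    using assms by (simp add: of_nat_diff field_simps)
  then show ?thesis by (simp only: xi_power cis_pi_minus)
qed

lemma tau_squared: "tau\<^sup>2 = tau + 1"
  unfolding tau_def by (simp add: power2_eq_square field_simps)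

lemma sin_pi_div_5_gt_0: "sin (pi/5) > 0"
  by (rule sin_gt_zero) (use pi_gt_zero in linarith)+

lemma Re_Im_xi:
  "Re xi = tau/2" "Im xi = sin (pi/5)"
  "Re (xi\<^sup>2) = (tau - 1)/2" "Im (xi\<^sup>2) = tau * sin (pi/5)"
proof -
  have xi2: "xi\<^sup>2 = cis (2 * (pi/5))" unfolding xi_eq_cis DeMoivre by simp
  show "Re xi = tau/2" "Im xi = sin (pi/5)" unfolding xi_eq_cis by (simp_all add: cos_pi_div_5)
  show "Re (xi\<^sup>2) = (tau - 1)/2"
    unfolding xi2 cis.simps cos_double_cos cos_pi_div_5 by (simp add: power_divide tau_squared)
  show "Im (xi\<^sup>2) = tau * sin (pi/5)"
    unfolding xi2 cis.simps sin_double cos_pi_div_5 by simp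
qed

lemma sum_lessThan_5:
  fixes f :: "nat \<Rightarrow> 'a::comm_monoid_add"
  shows "(\<Sum>j<5. f j) = f 0 + f 1 + f 2 + f 3 + f 4"
  by (simp add: eval_nat_numeral ac_simps)

lemma Re_Im_sum_xi_power:
  fixes d :: "nat \<Rightarrow> int"
  shows "Re (\<Sum>j<5. of_int (d j) * xi ^ j)
      = of_int (d 0) + of_int (d 1 - d 4) * tau/2 + of_int (d 2 - d 3) * (tau - 1)/2"
    and "Im (\<Sum>j<5. of_int (d j) * xi ^ j)
      = sin (pi/5) * (of_int (d 1 + d 4) + of_int (d 2 + d 3) * tau)"
proof -
  have xi_3_4: "Re (xi ^ 3) = - Re (xi\<^sup>2)" "Im (xi ^ 3) = Im (xi\<^sup>2)"
    "Re (xi ^ 4) = - Re xi" "Im (xi ^ 4) = Im xi"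
    using xi_power_reflect[of 1] xi_power_reflect[of 2] by (simp_all del: complex_cnj_power)
  show "Re (\<Sum>j<5. of_int (d j) * xi ^ j)
      = of_int (d 0) + of_int (d 1 - d 4) * tau/2 + of_int (d 2 - d 3) * (tau - 1)/2"
    and "Im (\<Sum>j<5. of_int (d j) * xi ^ j)
      = sin (pi/5) * (of_int (d 1 + d 4) + of_int (d 2 + d 3) * tau)"
    unfolding sum_lessThan_5 by (simp_all add: xi_3_4 Re_Im_xi field_simps)
qed

lemma L_decomp:
  assumes "x \<in> L n"
  obtains D P Q :: int
  where "\<bar>D\<bar> + 2 * \<bar>P\<bar> + 2 * \<bar>Q\<bar> \<le> int n"
    and "x = of_int D + of_int P * tau + of_int Q * (tau - 1)"
proof -
  from assms obtain z c where x: "x = Re z" "Im z = 0" and c: "(\<Sum>j<10. c j) \<le> n"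
    and z: "z = (\<Sum>j<10. of_nat (c j) * xi ^ j)"
    unfolding L_def by blast
  define d where "d j = int (c j) - int (c (j + 5))" for j
  have "z = (\<Sum>j<2*5. of_int (int (c j)) * xi ^ j)" using z by simp
  also have "\<dots> = (\<Sum>j<5. of_int (d j) * xi ^ j)"
    unfolding sum_power_fold_neg_one[OF xi_power_5] d_def by simp
  finally have z5: "z = (\<Sum>j<5. of_int (d j) * xi ^ j)" .
  have "of_int (d 1 + d 4) + of_int (d 2 + d 3) * tau = of_int 0 + of_int 0 * tau"
    using x(2) sin_pi_div_5_gt_0 unfolding z5 Re_Im_sum_xi_power by simp
  then have "d 1 + d 4 = 0 \<and> d 2 + d 3 = 0" by (rule Ztau_coords_unique)
  then have d4: "d 4 = - d 1" and d3: "d 3 = - d 2" by simp_all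
  have "x = of_int (d 0) + of_int (d 1) * tau + of_int (d 2) * (tau - 1)"
    using d3 d4 unfolding x(1) z5 Re_Im_sum_xi_power by (simp add: field_simps)
  moreover have "\<bar>d 0\<bar> + 2 * \<bar>d 1\<bar> + 2 * \<bar>d 2\<bar> \<le> int n"
  proof -
    have "\<bar>d 0\<bar> + 2 * \<bar>d 1\<bar> + 2 * \<bar>d 2\<bar> = (\<Sum>j<5. \<bar>d j\<bar>)"
      unfolding sum_lessThan_5 d3 d4 by simp
    also have "\<dots> \<le> (\<Sum>j<5. int (c j) + int (c (j + 5)))"
      by (rule sum_mono) (simp add: d_def)
    also have "\<dots> = int (\<Sum>j<2*5. c j)"
      by (simp only: sum_lessThan_double) (simp add: of_nat_sum)
    also have "\<dots> \<le> int n" using c by (simp del: of_nat_sum)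
    finally show ?thesis .
  qed
  ultimately show ?thesis using that by blast
qed

lemma abs_lincomb_le:
  fixes d p q s t :: real
  assumes "\<bar>s\<bar> \<le> 2" "\<bar>t\<bar> \<le> 2"
  shows "\<bar>d + p * s + q * t\<bar> \<le> \<bar>d\<bar> + 2 * \<bar>p\<bar> + 2 * \<bar>q\<bar>"
proof -
  have "\<bar>p * s\<bar> \<le> 2 * \<bar>p\<bar>" "\<bar>q * t\<bar> \<le> 2 * \<bar>q\<bar>"
    using assms by (simp_all add: abs_mult mult_left_mono mult.commute)
  then show ?thesis
    using abs_triangle_ineq[of d "p * s"] abs_triangle_ineq[of "d + p * s" "q * t"] by linarith
qed

lemma Ztau_in_window:
  assumes "\<bar>of_int a + of_int b * tau\<bar> \<le> r" "\<bar>of_int a + of_int b * (1 - tau)\<bar> \<le> r"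
  shows "of_int a + of_int b * tau \<in> Sigma_win {-r..r} \<inter> {-r..r}"
  using assms conj5_Ztau[of a b] unfolding Sigma_win_def Ztau_def by auto

lemma L_subset_window: "L n \<subseteq> Sigma_win {- real n .. real n} \<inter> {- real n .. real n}"
proof
  fix x assume "x \<in> L n"
  then obtain D P Q :: int where cost: "\<bar>D\<bar> + 2 * \<bar>P\<bar> + 2 * \<bar>Q\<bar> \<le> int n"
    and x: "x = of_int D + of_int P * tau + of_int Q * (tau - 1)"
    by (rule L_decomp)
  have cost_real: "\<bar>of_int D\<bar> + 2 * \<bar>of_int P\<bar> + 2 * \<bar>of_int Q\<bar> \<le> real n"
    using cost by linarith
  have tau_coeffs: "\<bar>tau\<bar> \<le> 2" "\<bar>tau - 1\<bar> \<le> 2" "\<bar>1 - tau\<bar> \<le> 2" "\<bar>- tau\<bar> \<le> 2"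
    using tau_bounds by auto
  have x_Ztau: "x = of_int (D - Q) + of_int (P + Q) * tau"
    using x by (simp add: algebra_simps)
  have "\<bar>of_int (D - Q) + of_int (P + Q) * tau\<bar> \<le> real n"
  proof -
    have "\<bar>of_int D + of_int P * tau + of_int Q * (tau - 1)\<bar> \<le> real n"
      using abs_lincomb_le[OF tau_coeffs(1,2)] cost_real by (rule order.trans)
    then show ?thesis by (simp add: algebra_simps)
  qed
  moreover have "\<bar>of_int (D - Q) + of_int (P + Q) * (1 - tau)\<bar> \<le> real n"
  proof -
    have "\<bar>of_int D + of_int P * (1 - tau) + of_int Q * (- tau)\<bar> \<le> real n"
      using abs_lincomb_le[OF tau_coeffs(3,4)] cost_real by (rule order.trans)
    then show ?thesis by (simp add: algebra_simps)
  qed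
  ultimately show "x \<in> Sigma_win {- real n .. real n} \<inter> {- real n .. real n}"
    unfolding x_Ztau by (rule Ztau_in_window)
qed

lemma Ztau_notin_L:
  fixes a b :: int
  assumes "\<And>Q. int n < \<bar>a + Q\<bar> + 2 * \<bar>b - Q\<bar> + 2 * \<bar>Q\<bar>"
  shows "of_int a + of_int b * tau \<notin> L n"
proof
  assume "of_int a + of_int b * tau \<in> L n"
  then obtain D P Q :: int where cost: "\<bar>D\<bar> + 2 * \<bar>P\<bar> + 2 * \<bar>Q\<bar> \<le> int n"
    and "of_int a + of_int b * tau = of_int D + of_int P * tau + of_int Q * (tau - 1)"
    by (rule L_decomp)
  then have "of_int a + of_int b * tau = of_int (D - Q) + of_int (P + Q) * tau"
    by (simp add: algebra_simps)
  then have "a = D - Q" "b = P + Q" using Ztau_coords_unique by blast+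
  with cost assms[of Q] show False by simp
qed

lemma window_point_notin_L:
  assumes "n \<ge> 3"
  obtains x where "x \<in> Sigma_win {- real n .. real n} \<inter> {- real n .. real n}" "x \<notin> L n"
proof -
  obtain a b :: int
    where "\<And>Q. int n < \<bar>a + Q\<bar> + 2 * \<bar>b - Q\<bar> + 2 * \<bar>Q\<bar>"
      and "\<bar>of_int a + of_int b * tau\<bar> \<le> real n" "\<bar>of_int a + of_int b * (1 - tau)\<bar> \<le> real n"
  proof (cases "n = 3")
    case True
    show ?thesis
      by (rule that[of "-1" 2]) (use True tau_bounds in \<open>simp_all add: abs_if\<close>)
  next
    case False
    with assms have "n \<ge> 4" by simp
    then show ?thesis
      by (intro that[of "2 - int n" 3]) (use tau_bounds in \<open>simp_all add: abs_if\<close>)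
  qed
  then show ?thesis using that Ztau_in_window Ztau_notin_L by blast
qed

theorem lemma6p10:
  fixes n :: nat
  assumes "n \<ge> 3"
  shows "L n \<subset> Sigma_win {- real n .. real n} \<inter> {- real n .. real n}"
  using L_subset_window window_point_notin_L[OF assms] by blast

end
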